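(* Let $L,L'$ be links and suppose $W:\mathrm{HY}(L)\to\mathrm{HY}(L')$ is a grading-preserving linear map that commutes with the action of $\mathcal{F}_k$ for all $k\ge1$. Then $W$ commutes with the action of the involution $\Phi$ and of the dual operators $\mathcal{E}_k=\Phi\mathcal{F}_k\Phi$.
   Context: $\mathrm{HY}(L)$ is the (triply graded, with gradings written $\mathrm{HY}^i_{a,b}$) $y$-ified Khovanov–Rozansky homology of Gorsky–Hogancamp. $\mathcal F_k$ ($k\ge1$) are the tautological operators of Gorsky–Hogancamp–Mellit, and $\mathcal F_1$ satisfies the curious hard Lefschetz property: $\mathcal F_1^j:\mathrm{HY}^i_{-2j,k}\to\mathrm{HY}^i_{2j,k+2j}$ is an isomorphism for all $i,k$ and $j\ge0$. A nonzero $v\in\mathrm{HY}^i_{-2j,k}$ with $j\ge0$ and $\mathcal F_1^{j+1}v=0$ is a highest weight vector; $\mathrm{HY}$ has a basis of vectors $\mathcal F_1^sv$ with $v$ highest weight and $s\le j$. The operator $\mathcal E_1$ is defined by $\mathcal E_1(\mathcal F_1^sv)=0$ if $s=0$ and $s(j-s+1)\mathcal F_1^{s-1}v$ if $s>0$; the involution $\Phi$ by $\Phi(\mathcal F_1^sv)=\frac{1}{(j-s)\cdots(s+1)}\mathcal F_1^{j-s}v$ if $j-2s>0$, $\mathcal F_1^sv$ if $j=2s$, $s\cdots(j-s+1)\mathcal F_1^{j-s}v$ if $j-2s<0$. $\mathcal E_k=\Phi\mathcal F_k\Phi$. *)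

theory Defs
  imports Complex_Main
begin

(* Abstract model of y-ified homology HY(L) with its tautological operators.
   A degree is a triple (i, a, b), written HY^i_{a,b}.
   The space is a vector space over a field of characteristic 0 (scale),
   H d is the graded piece of degree d, F k is the operator F_k (k >= 1). *)

type_synonym deg = "int \<times> int \<times> int"

definition highest_weight ::
  "(deg \<Rightarrow> 'v set) \<Rightarrow> (nat \<Rightarrow> 'v \<Rightarrow> 'v::zero) \<Rightarrow> 'v \<Rightarrow> int \<Rightarrow> nat \<Rightarrow> int \<Rightarrow> bool" where
  "highest_weight H F v i j k \<longleftrightarrow>
     v \<in> H (i, - 2 * int j, k) \<and> v \<noteq> 0 \<and> (F 1 ^^ (j + 1)) v = 0"

(* Structure of HY(L): graded vector space (direct sum of its graded pieces),
   linear operators F_k, curious hard Lefschetz for F_1, and the basis fact: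
   HY is spanned by the vectors F_1^s v, v highest weight in HY^i_{-2j,k}, s <= j. *)
definition HY_structure ::
  "('a::field_char_0 \<Rightarrow> 'v::ab_group_add \<Rightarrow> 'v) \<Rightarrow> (deg \<Rightarrow> 'v set) \<Rightarrow> (nat \<Rightarrow> 'v \<Rightarrow> 'v) \<Rightarrow> bool" where
  "HY_structure scale H F \<longleftrightarrow>
     vector_space scale
   \<and> (\<forall>d. module.subspace scale (H d))
   \<and> (\<forall>x. \<exists>!c. finite {d. c d \<noteq> 0} \<and> (\<forall>d. c d \<in> H d) \<and> x = sum c {d. c d \<noteq> 0})
   \<and> (\<forall>k\<ge>1. Vector_Spaces.linear scale scale (F k))
   \<and> (\<forall>i k j. bij_betw (F 1 ^^ j) (H (i, - 2 * int j, k)) (H (i, 2 * int j, k + 2 * int j)))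
   \<and> module.span scale
       {(F 1 ^^ s) v | v s i j k. highest_weight H F v i j k \<and> s \<le> j} = UNIV"

definition is_Phi ::
  "('a::field_char_0 \<Rightarrow> 'v::ab_group_add \<Rightarrow> 'v) \<Rightarrow> (deg \<Rightarrow> 'v set) \<Rightarrow> (nat \<Rightarrow> 'v \<Rightarrow> 'v) \<Rightarrow> ('v \<Rightarrow> 'v) \<Rightarrow> bool" where
  "is_Phi scale H F Phi \<longleftrightarrow>
     Vector_Spaces.linear scale scale Phi
   \<and> (\<forall>v i j k s. highest_weight H F v i j k \<and> s \<le> j \<longrightarrow>
        Phi ((F 1 ^^ s) v) =
          (if 2 * s < j then scale (1 / (\<Prod>t\<in>{s+1..j-s}. of_nat t)) ((F 1 ^^ (j - s)) v)
           else if 2 * s = j then (F 1 ^^ s) v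
           else scale (\<Prod>t\<in>{j-s+1..s}. of_nat t) ((F 1 ^^ (j - s)) v)))"

definition E_op :: "('v \<Rightarrow> 'v) \<Rightarrow> (nat \<Rightarrow> 'v \<Rightarrow> 'v) \<Rightarrow> nat \<Rightarrow> 'v \<Rightarrow> 'v" where
  "E_op Phi F k = Phi \<circ> F k \<circ> Phi"

end

theory Submission
  imports Defs
begin

(* On the basis vectors F_1^s v, Phi is a scalar multiple of F_1^(j-s) v, the scalar depending
   only on s and the weight j of the highest weight vector v. A grading-preserving W commuting
   with F_1 sends v either to 0 or to a highest weight vector of the same weight j, hence
   W (Phi (F_1^s v)) and Phi' (W (F_1^s v)) are the same multiple of F_1'^(j-s) (W v). Both maps
   are linear and the basis vectors span, so W Phi = Phi' W; the claim for E_k = Phi F_k Phi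
   follows by composing. *)

lemma funpow_intertwine:
  assumes "W \<circ> f = g \<circ> W"
  shows "W ((f ^^ n) x) = (g ^^ n) (W x)"
proof (induction n)
  case 0
  then show ?case by simp
next
  case (Suc n)
  then show ?case using fun_cong[OF assms, of "(f ^^ n) x"] by simp
qed

lemma funpow_fixed_point:
  assumes "f a = a"
  shows "(f ^^ n) a = a"
  by (induction n) (simp_all add: assms)

definition Phi_coeff :: "nat \<Rightarrow> nat \<Rightarrow> 'a::field_char_0" where
  "Phi_coeff s j = (if 2 * s < j then 1 / (\<Prod>t\<in>{s+1..j-s}. of_nat t)
     else if 2 * s = j then 1
     else (\<Prod>t\<in>{j-s+1..s}. of_nat t))"

lemma is_Phi_on_generator:
  assumes "vector_space scale" and "is_Phi scale H F Phi"
    and "highest_weight H F v i j k" and "s \<le> j"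
  shows "Phi ((F 1 ^^ s) v) = scale (Phi_coeff s j) ((F 1 ^^ (j - s)) v)"
proof -
  interpret vector_space scale by fact
  have "Phi ((F 1 ^^ s) v) =
      (if 2 * s < j then scale (1 / (\<Prod>t\<in>{s+1..j-s}. of_nat t)) ((F 1 ^^ (j - s)) v)
       else if 2 * s = j then (F 1 ^^ s) v
       else scale (\<Prod>t\<in>{j-s+1..s}. of_nat t) ((F 1 ^^ (j - s)) v))"
    using assms(2-4) unfolding is_Phi_def by blast
  moreover have "2 * s = j \<Longrightarrow> j - s = s" by simp
  ultimately show ?thesis
    by (simp add: Phi_coeff_def)
qed

lemma highest_weight_image:
  assumes "W 0 = 0" and "\<forall>d. W ` H d \<subseteq> H' d" and "W \<circ> F 1 = F' 1 \<circ> W"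
    and "highest_weight H F v i j k" and "W v \<noteq> 0"
  shows "highest_weight H' F' (W v) i j k"
proof -
  have "(F' 1 ^^ (j + 1)) (W v) = W ((F 1 ^^ (j + 1)) v)"
    by (rule funpow_intertwine[OF assms(3), symmetric])
  also have "\<dots> = 0"
    using assms(1,4) unfolding highest_weight_def by simp
  finally show ?thesis
    using assms(2,4,5) unfolding highest_weight_def by blast
qed

lemma intertwiner_commutes_Phi_on_generator:
  assumes "vector_space scale" and "vector_space scale'"
    and "is_Phi scale H F Phi" and "is_Phi scale' H' F' Phi'"
    and W: "Vector_Spaces.linear scale scale' W"
    and "\<forall>d. W ` H d \<subseteq> H' d" and WF: "W \<circ> F 1 = F' 1 \<circ> W" and "F' 1 0 = 0"
    and hw: "highest_weight H F v i j k" and "s \<le> j"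
  shows "W (Phi ((F 1 ^^ s) v)) = Phi' (W ((F 1 ^^ s) v))"
proof -
  interpret W: Vector_Spaces.linear scale scale' W by (fact W)
  have W_generator: "W ((F 1 ^^ n) v) = (F' 1 ^^ n) (W v)" for n
    by (rule funpow_intertwine[OF WF])
  have "W (Phi ((F 1 ^^ s) v)) = W (scale (Phi_coeff s j) ((F 1 ^^ (j - s)) v))"
    by (simp only: is_Phi_on_generator[OF assms(1,3) hw \<open>s \<le> j\<close>])
  also have "\<dots> = scale' (Phi_coeff s j) ((F' 1 ^^ (j - s)) (W v))"
    by (simp only: W.scale W_generator)
  finally have lhs: "W (Phi ((F 1 ^^ s) v)) = scale' (Phi_coeff s j) ((F' 1 ^^ (j - s)) (W v))" .
  show ?thesis
  proof (cases "W v = 0")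
    case True
    interpret Phi': Vector_Spaces.linear scale' scale' Phi'
      using assms(4) unfolding is_Phi_def by blast
    have "(F' 1 ^^ n) 0 = 0" for n
      by (rule funpow_fixed_point) (fact \<open>F' 1 0 = 0\<close>)
    then show ?thesis
      unfolding lhs W_generator True by (simp add: Phi'.zero W.vs2.scale_zero_right)
  next
    case False
    then have "highest_weight H' F' (W v) i j k"
      by (rule highest_weight_image[where F' = F', OF W.zero assms(6) WF hw])
    then show ?thesis
      unfolding lhs W_generator by (rule is_Phi_on_generator[OF assms(2,4) _ \<open>s \<le> j\<close>, symmetric])
  qed
qed

lemma intertwiner_commutes_Phi:
  assumes HY: "HY_structure scale H F" and HY': "HY_structure scale' H' F'"
    and Phi: "is_Phi scale H F Phi" and Phi': "is_Phi scale' H' F' Phi'"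
    and W: "Vector_Spaces.linear scale scale' W"
    and "\<forall>d. W ` H d \<subseteq> H' d" and "W \<circ> F 1 = F' 1 \<circ> W"
  shows "W \<circ> Phi = Phi' \<circ> W"
proof
  fix x
  have vs: "vector_space scale" "vector_space scale'"
    using HY HY' unfolding HY_structure_def by blast+
  interpret vector_space_pair scale scale'
    using vs by (simp add: vector_space_pair_def)
  interpret F'1: Vector_Spaces.linear scale' scale' "F' 1"
    using HY' unfolding HY_structure_def by simp
  let ?B = "{(F 1 ^^ s) v | v s i j k. highest_weight H F v i j k \<and> s \<le> j}"
  have "Vector_Spaces.linear scale scale' (W \<circ> Phi)"
    using Phi W unfolding is_Phi_def by (blast intro: Vector_Spaces.linear_compose)
  moreover have "Vector_Spaces.linear scale scale' (Phi' \<circ> W)"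
    using Phi' W unfolding is_Phi_def by (blast intro: Vector_Spaces.linear_compose)
  moreover have "x \<in> vs1.span ?B"
    using HY unfolding HY_structure_def by simp
  moreover have "(W \<circ> Phi) b = (Phi' \<circ> W) b" if "b \<in> ?B" for b
    using that intertwiner_commutes_Phi_on_generator[OF vs Phi Phi' W assms(6,7) F'1.zero]
    by (auto simp only: comp_apply)
  ultimately show "(W \<circ> Phi) x = (Phi' \<circ> W) x"
    by (rule linear_eq_on)
qed

lemma intertwiner_commutes_E_op:
  assumes "W \<circ> Phi = Phi' \<circ> W" and "W \<circ> F k = F' k \<circ> W"
  shows "W \<circ> E_op Phi F k = E_op Phi' F' k \<circ> W"
proof -
  have "W \<circ> E_op Phi F k = (W \<circ> Phi) \<circ> F k \<circ> Phi"
    by (simp add: E_op_def comp_assoc)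
  also have "\<dots> = Phi' \<circ> (W \<circ> F k) \<circ> Phi"
    using assms(1) by (simp add: comp_assoc)
  also have "\<dots> = Phi' \<circ> F' k \<circ> (W \<circ> Phi)"
    using assms(2) by (simp add: comp_assoc)
  also have "\<dots> = E_op Phi' F' k \<circ> W"
    using assms(1) by (simp add: E_op_def comp_assoc)
  finally show ?thesis .
qed

theorem corollary2p9:
  fixes scale :: "'a::field_char_0 \<Rightarrow> 'v::ab_group_add \<Rightarrow> 'v"
    and scale' :: "'a \<Rightarrow> 'w::ab_group_add \<Rightarrow> 'w"
    and H :: "deg \<Rightarrow> 'v set" and H' :: "deg \<Rightarrow> 'w set"
    and F :: "nat \<Rightarrow> 'v \<Rightarrow> 'v" and F' :: "nat \<Rightarrow> 'w \<Rightarrow> 'w"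
    and Phi :: "'v \<Rightarrow> 'v" and Phi' :: "'w \<Rightarrow> 'w"
    and W :: "'v \<Rightarrow> 'w"
  assumes "HY_structure scale H F" and "HY_structure scale' H' F'"
    and "is_Phi scale H F Phi" and "is_Phi scale' H' F' Phi'"
    and "Vector_Spaces.linear scale scale' W"
    and "\<forall>d. W ` H d \<subseteq> H' d"
    and "\<forall>k\<ge>1. W \<circ> F k = F' k \<circ> W"
  shows "W \<circ> Phi = Phi' \<circ> W \<and> (\<forall>k\<ge>1. W \<circ> E_op Phi F k = E_op Phi' F' k \<circ> W)"
proof -
  have "W \<circ> Phi = Phi' \<circ> W"
    using intertwiner_commutes_Phi[OF assms(1-6)] assms(7) by simp
  then show ?thesis
    using intertwiner_commutes_E_op assms(7) by blast
qed

end
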